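(* Let $N\ge 2$ and $1\le \tilde N\le N-1$ be integers, and consider the value functions $V_n^{\tilde N}$, $n\in\{0,\dots,N\}$, and the minimizers $\mu_n$ defined in the context. Suppose there exists $\beta>0$ such that, for all $x\in\mathcal{X}$, $$V_{\tilde N+1}^{\tilde N}(x)\le (\beta+1)\,V_{\tilde N}^{\tilde N}(x)\qquad\text{and}\qquad V_n^{\tilde N}(x)\le (\beta+1)\,l(x,\mu_n(x))\ \text{ for all } n\in\{\tilde N+1,\dots,N\}.$$ Then for all $x\in\mathcal{X}$, $$\frac{(\beta+1)^{N-\tilde N-1}}{(\beta+1)^{N-\tilde N-1}+\beta^{N-\tilde N}}\;V_N^{\tilde N}(x)\;\le\; V_{N-1}^{\tilde N}(x).$$
   Context: Let $\mathcal{D}\subset\mathbb{R}^n$ and $\mathcal{U}\subset\mathbb{R}^m$ be compact, and let $f:\mathcal{D}\times\mathcal{U}\to\mathcal{D}$ define the discrete-time system $x(k+1)=f(x(k),u(k))$, with $f(0,0)=0$. The stage cost $l:\mathcal{D}\times\mathcal{U}\to[0,\infty)$ is positive definite with $l(0,0)=0$. The set $\mathcal{X}\subseteq\mathcal{D}$ is control invariant: for every $x\in\mathcal{X}$ there is $u\in\mathcal{U}$ with $f(x,u)\in\mathcal{X}$. For $x\in\mathcal{X}$ write $\mathcal{U}(x)=\{u\in\mathcal{U}: f(x,u)\in\mathcal{X}\}$. Fix integers $N$ and $\tilde N$ with $0\le\tilde N\le N-1$. Define value functions on $\mathcal{X}$ recursively (dynamic programming form of the MPC problem with prediction horizon $N$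 in which the state constraint $x\in\mathcal{X}$ is imposed only during the first $N-\tilde N$ steps, the last $\tilde N$ steps being unconstrained): - $V_0^{\tilde N}\equiv 0$. - For $n\in\{1,\dots,\tilde N\}$: $V_n^{\tilde N}(x)=\min_{u\in\mathcal{U}}\big[V_{n-1}^{\tilde N}(f(x,u))+l(x,u)\big]$, with $\mu_n(x)$ a minimizer. - For $n\in\{\tilde N+1,\dots,N\}$: $V_n^{\tilde N}(x)=\min_{u\in\mathcal{U}(x)}\big[V_{n-1}^{\tilde N}(f(x,u))+l(x,u)\big]$, with $\mu_n(x)$ a minimizer; in particular $f(x,\mu_n(x))\in\mathcal{X}$. Equivalently, $V_n^{\tilde N}(x)$ is the minimal $n$-step cost $\sum_{i=0}^{n-1}l(x_i,u_i)$ over $u_i\in\mathcal{U}$, with $x_0=x$, $x_{i+1}=f(x_i,u_i)$, subject to the state constraints on the early steps of the horizon. All minima are assumed to be attained. *)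

theory Defs
  imports "HOL-Analysis.Analysis"
begin

text \<open>Value functions of the MPC problem in dynamic programming form.
  mpc_V f l U X Nt n x is V_n^Nt(x): for n \<le> Nt the input ranges over U,
  for n > Nt over the admissible inputs {u \<in> U. f x u \<in> X}.\<close>

fun mpc_V :: "('a \<Rightarrow> 'b \<Rightarrow> 'a) \<Rightarrow> ('a \<Rightarrow> 'b \<Rightarrow> real) \<Rightarrow> 'b set \<Rightarrow> 'a set
              \<Rightarrow> nat \<Rightarrow> nat \<Rightarrow> 'a \<Rightarrow> real" where
  "mpc_V f l U X Nt 0 x = 0"
| "mpc_V f l U X Nt (Suc n) x =
     (if Suc n \<le> Nt
      then (INF u\<in>U. mpc_V f l U X Nt n (f x u) + l x u)
      else (INF u\<in>{u\<in>U. f x u \<in> X}. mpc_V f l U X Nt n (f x u) + l x u))"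

end

theory Submission
  imports Defs
begin

text \<open>On the constrained part of the horizon, H2 says that the first stage cost carries at least
  a fraction 1/(\<beta>+1) of V_n. Following the minimiser \<mu>_n one step and inserting the
  already established bound V_n \<le> (1 + c) V_{n-1} at the successor state turns the factor
  1 + c into 1 + c \<beta>/(\<beta>+1). Starting from H1 (c = \<beta> at n = Nt+1), induction gives
  V_{Nt+m} \<le> (1 + \<beta>^m/(\<beta>+1)^(m-1)) V_{Nt+m-1}, which for m = N - Nt is the claim.\<close>

text \<open>A + L is V_n(x) split along the minimiser, and V' bounds V_n at the successor state.\<close>

lemma one_step_growth_bound:
  fixes \<beta> c A L V' :: real
  assumes "\<beta> > 0" "c \<ge> 0"
    and "A + L \<le> (\<beta> + 1) * L"
    and "V' \<le> (1 + c) * A"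
  shows "V' + L \<le> (1 + c * \<beta> / (\<beta> + 1)) * (A + L)"
proof -
  have "(\<beta> + 1) * A \<le> \<beta> * (A + L)"
    using assms(3) by (simp add: algebra_simps)
  then have "A \<le> \<beta> * (A + L) / (\<beta> + 1)"
    using assms(1) by (simp add: pos_le_divide_eq mult.commute)
  then have "c * A \<le> c * (\<beta> * (A + L) / (\<beta> + 1))"
    using assms(2) by (intro mult_left_mono)
  with assms(4) show ?thesis
    by (simp add: algebra_simps)
qed

context
  fixes f :: "'a \<Rightarrow> 'b \<Rightarrow> 'a" and l :: "'a \<Rightarrow> 'b \<Rightarrow> real"
    and D :: "'a set" and U :: "'b set" and X :: "'a set" and Nt :: nat
  assumes U_nonempty: "U \<noteq> {}"
    and f_maps: "\<And>x u. x \<in> D \<Longrightarrow> u \<in> U \<Longrightarrow> f x u \<in> D"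
    and l_nonneg: "\<And>x u. x \<in> D \<Longrightarrow> u \<in> U \<Longrightarrow> l x u \<ge> 0"
    and X_sub: "X \<subseteq> D"
    and X_inv: "\<And>x. x \<in> X \<Longrightarrow> \<exists>u\<in>U. f x u \<in> X"
begin

lemma mpc_V_nonneg_unconstrained:
  assumes "n \<le> Nt" "x \<in> D"
  shows "0 \<le> mpc_V f l U X Nt n x"
  using assms
proof (induction n arbitrary: x)
  case (Suc n)
  have "0 \<le> (INF u\<in>U. mpc_V f l U X Nt n (f x u) + l x u)"
    using Suc f_maps l_nonneg U_nonempty by (intro cINF_greatest) auto
  with Suc.prems show ?case by simp
qed simp

lemma mpc_V_nonneg:
  assumes "x \<in> X"
  shows "0 \<le> mpc_V f l U X Nt n x"
  using assms
proof (induction n arbitrary: x)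
  case (Suc n)
  show ?case
  proof (cases "Suc n \<le> Nt")
    case True
    then show ?thesis using mpc_V_nonneg_unconstrained Suc.prems X_sub by blast
  next
    case False
    have "0 \<le> (INF u\<in>{u\<in>U. f x u \<in> X}. mpc_V f l U X Nt n (f x u) + l x u)"
      using Suc X_inv l_nonneg X_sub by (intro cINF_greatest) (auto, blast)
    with False show ?thesis by simp
  qed
qed simp

lemma mpc_V_Suc_le_admissible:
  assumes "Nt \<le> n" "x \<in> X" "u \<in> U" "f x u \<in> X"
  shows "mpc_V f l U X Nt (Suc n) x \<le> mpc_V f l U X Nt n (f x u) + l x u"
proof -
  have "bdd_below ((\<lambda>u. mpc_V f l U X Nt n (f x u) + l x u) ` {u\<in>U. f x u \<in> X})"
    using mpc_V_nonneg l_nonneg X_sub assms(2) by (intro bdd_belowI[where m = 0]) auto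
  then have "(INF u\<in>{u\<in>U. f x u \<in> X}. mpc_V f l U X Nt n (f x u) + l x u)
      \<le> mpc_V f l U X Nt n (f x u) + l x u"
    using assms by (intro cINF_lower) auto
  with assms(1) show ?thesis by simp
qed

lemma mpc_V_growth_bound:
  fixes \<beta> :: real and \<mu> :: "nat \<Rightarrow> 'a \<Rightarrow> 'b"
  assumes mu_con: "\<And>n x. n \<in> {Nt+1..N} \<Longrightarrow> x \<in> X \<Longrightarrow>
        \<mu> n x \<in> U \<and> f x (\<mu> n x) \<in> X \<and>
        mpc_V f l U X Nt n x = mpc_V f l U X Nt (n - 1) (f x (\<mu> n x)) + l x (\<mu> n x)"
    and beta_pos: "\<beta> > 0"
    and H1: "\<And>x. x \<in> X \<Longrightarrow> mpc_V f l U X Nt (Nt + 1) x \<le> (\<beta> + 1) * mpc_V f l U X Nt Nt x"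
    and H2: "\<And>x n. x \<in> X \<Longrightarrow> n \<in> {Nt+1..N} \<Longrightarrow>
        mpc_V f l U X Nt n x \<le> (\<beta> + 1) * l x (\<mu> n x)"
    and m: "1 \<le> m" "Nt + m \<le> N" and x: "x \<in> X"
  shows "mpc_V f l U X Nt (Nt + m) x
    \<le> (1 + \<beta> ^ m / (\<beta> + 1) ^ (m - 1)) * mpc_V f l U X Nt (Nt + m - 1) x"
  using m x
proof (induction m arbitrary: x rule: nat_induct_at_least)
  case base
  then show ?case using H1 by (simp add: algebra_simps)
next
  case (Suc m)
  let ?V = "mpc_V f l U X Nt"
  define u where "u = \<mu> (Nt + m) x"
  have n: "Nt + m \<in> {Nt+1..N}" using Suc by auto
  from mu_con[OF n Suc.prems(2)] have u: "u \<in> U" "f x u \<in> X"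
    and split: "?V (Nt + m) x = ?V (Nt + m - 1) (f x u) + l x u"
    by (auto simp: u_def)
  have "?V (Nt + Suc m) x \<le> ?V (Nt + m) (f x u) + l x u"
    using mpc_V_Suc_le_admissible u Suc.prems by simp
  also have "\<dots> \<le> (1 + \<beta> ^ m / (\<beta> + 1) ^ (m - 1) * \<beta> / (\<beta> + 1)) * ?V (Nt + m) x"
    unfolding split
  proof (rule one_step_growth_bound[OF beta_pos])
    show "?V (Nt + m - 1) (f x u) + l x u \<le> (\<beta> + 1) * l x u"
      using H2[OF Suc.prems(2) n] split by (simp add: u_def)
    show "?V (Nt + m) (f x u) \<le> (1 + \<beta> ^ m / (\<beta> + 1) ^ (m - 1)) * ?V (Nt + m - 1) (f x u)"
      using Suc u by simp
  qed (use beta_pos in simp)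
  also have "\<beta> ^ m / (\<beta> + 1) ^ (m - 1) * \<beta> / (\<beta> + 1) = \<beta> ^ Suc m / (\<beta> + 1) ^ (Suc m - 1)"
    using Suc.hyps by (cases m) (auto simp: field_simps)
  finally show ?case by simp
qed

end

lemma div_add_mult_le_of_le_one_plus_div:
  fixes q b v w :: real
  assumes "q > 0" "b \<ge> 0" "v \<le> (1 + b / q) * w"
  shows "q / (q + b) * v \<le> w"
proof -
  have "v \<le> (q + b) / q * w"
    using assms(1,3) by (simp add: field_simps)
  then have "q / (q + b) * v \<le> q / (q + b) * ((q + b) / q * w)"
    using assms(1,2) by (intro mult_left_mono) auto
  also have "\<dots> = w"
    using assms(1,2) by simp
  finally show ?thesis .
qed

theorem lemma2:
  fixes f :: "'a::euclidean_space \<Rightarrow> 'b::euclidean_space \<Rightarrow> 'a"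
    and l :: "'a \<Rightarrow> 'b \<Rightarrow> real"
    and D :: "'a set" and U :: "'b set" and X :: "'a set"
    and N Nt :: nat and \<beta> :: real
    and \<mu> :: "nat \<Rightarrow> 'a \<Rightarrow> 'b"
  assumes D_compact: "compact D" and U_compact: "compact U"
    and zero_D: "0 \<in> D" and zero_U: "0 \<in> U"
    and f_maps: "\<And>x u. x \<in> D \<Longrightarrow> u \<in> U \<Longrightarrow> f x u \<in> D"
    and f_zero: "f 0 0 = 0"
    and l_nonneg: "\<And>x u. x \<in> D \<Longrightarrow> u \<in> U \<Longrightarrow> l x u \<ge> 0"
    and l_posdef: "\<And>x u. x \<in> D \<Longrightarrow> u \<in> U \<Longrightarrow> (x, u) \<noteq> (0, 0) \<Longrightarrow> l x u > 0"
    and l_zero: "l 0 0 = 0"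
    and X_sub: "X \<subseteq> D"
    and X_inv: "\<And>x. x \<in> X \<Longrightarrow> \<exists>u\<in>U. f x u \<in> X"
    and N_ge: "N \<ge> 2" and Nt_ge: "1 \<le> Nt" and Nt_le: "Nt \<le> N - 1"
    and mu_unc: "\<And>n x. n \<in> {1..Nt} \<Longrightarrow> x \<in> D \<Longrightarrow>
        \<mu> n x \<in> U \<and>
        mpc_V f l U X Nt n x = mpc_V f l U X Nt (n - 1) (f x (\<mu> n x)) + l x (\<mu> n x)"
    and mu_con: "\<And>n x. n \<in> {Nt+1..N} \<Longrightarrow> x \<in> X \<Longrightarrow>
        \<mu> n x \<in> U \<and> f x (\<mu> n x) \<in> X \<and>
        mpc_V f l U X Nt n x = mpc_V f l U X Nt (n - 1) (f x (\<mu> n x)) + l x (\<mu> n x)"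
    and beta_pos: "\<beta> > 0"
    and H1: "\<And>x. x \<in> X \<Longrightarrow> mpc_V f l U X Nt (Nt + 1) x \<le> (\<beta> + 1) * mpc_V f l U X Nt Nt x"
    and H2: "\<And>x n. x \<in> X \<Longrightarrow> n \<in> {Nt+1..N} \<Longrightarrow>
        mpc_V f l U X Nt n x \<le> (\<beta> + 1) * l x (\<mu> n x)"
  shows "\<And>x. x \<in> X \<Longrightarrow>
    ((\<beta> + 1) ^ (N - Nt - 1) / ((\<beta> + 1) ^ (N - Nt - 1) + \<beta> ^ (N - Nt)))
      * mpc_V f l U X Nt N x \<le> mpc_V f l U X Nt (N - 1) x"
proof -
  fix x assume x: "x \<in> X"
  define m where "m = N - Nt"
  have m: "1 \<le> m" "Nt + m = N" "N - Nt - 1 = m - 1"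
    using Nt_le N_ge by (auto simp: m_def)
  have "U \<noteq> {}" using zero_U by blast
  from mpc_V_growth_bound[where f = f and l = l and D = D and U = U and X = X and Nt = Nt,
      OF this f_maps l_nonneg X_sub X_inv mu_con beta_pos H1 H2 m(1) m(2)[THEN eq_refl] x]
  have "mpc_V f l U X Nt N x
      \<le> (1 + \<beta> ^ m / (\<beta> + 1) ^ (m - 1)) * mpc_V f l U X Nt (N - 1) x"
    using m(2) by simp
  then show "((\<beta> + 1) ^ (N - Nt - 1) / ((\<beta> + 1) ^ (N - Nt - 1) + \<beta> ^ (N - Nt)))
      * mpc_V f l U X Nt N x \<le> mpc_V f l U X Nt (N - 1) x"
    unfolding m(3) m_def[symmetric]
    using beta_pos by (intro div_add_mult_le_of_le_one_plus_div) auto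
qed

end
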